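(* Let $C$ be a program with total semantics and $e,e'$ expressions, and let $\Phi_{\langle C,e,e'\rangle}(f)(\sigma)=[\![e]\!](\sigma)\cdot f^\dagger([\![C]\!](\sigma))+[\![e']\!](\sigma)\cdot\eta(\sigma)$ for $f:\Sigma\to\mathcal W(\Sigma)$ and $\sigma\in\Sigma$. If $\Phi_{\langle C,e,e'\rangle}$ is a total function, then it is Scott continuous with respect to the pointwise order: $f_1\sqsubseteq^\bullet f_2$ iff $f_1(\sigma)\sqsubseteq f_2(\sigma)$ for all $\sigma\in\Sigma$.
   Context: $\mathcal A=\langle U,+,\cdot,\mathbf 0,\mathbf 1\rangle$ is a partial semiring ($+$ commutative, associative, possibly partial, unit $\mathbf 0$; $\cdot$ total, associative, unit $\mathbf 1$; two-sided distributivity; $\mathbf 0$ annihilates), naturally ordered ($u\le v$ iff $\exists w.\,u+w=v$ is a partial order), Scott continuous ($+$ and $\cdot$ preserve suprema of directed sets in each argument), with a top element. Infinite sums are suprema of finite partial sums. $\mathcal W(X)$: maps $m:X\to U$ with countable support $\{x:m(x)\ne\mathbf 0\}$ and defined mass, operations pointwise, $m_1\sqsubseteq m_2$ iff $m_1+m=m_2$ for some $m$. $\eta(x)(y)=\mathbf 1$ if $x=y$ else $\mathbf 0$; $f^\dagger(m)(y)=\sum_{x\in\mathrm{supp}(m)}m(x)\cdot f(x)(y)$. Programs over states $\Sigma$ are built from $\mathsf{skip}$, $;$, $+$, $\mathsf{assume}\ e$, iteration $C^{\langle e,e'\rangle}$ and atomic actions $a$ with $[\![a]\!]:\Sigma\to\mathcal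 W(\Sigma)$, with denotation $[\![C]\!]:\Sigma\to\mathcal W(\Sigma)$ (possibly partial because $+$ is partial). An expression $e$ is either a test $b$ (a Boolean combination of $\mathsf{true},\mathsf{false}$ and primitive tests $t\subseteq\Sigma$, with $[\![b]\!](\sigma)\in\{\mathbf 0,\mathbf 1\}$ and $[\![t]\!](\sigma)=\mathbf 1$ iff $\sigma\in t$) or a weight $u\in U$ with $[\![u]\!](\sigma)=u$. *)

theory Defs
  imports "HOL-Library.Countable_Set"
begin

record 'u psr =
  pplus  :: "'u \<Rightarrow> 'u \<Rightarrow> 'u option"
  ptimes :: "'u \<Rightarrow> 'u \<Rightarrow> 'u"
  pzero  :: 'u
  pone   :: 'u

definition nle :: "'u psr \<Rightarrow> 'u \<Rightarrow> 'u \<Rightarrow> bool" where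
  "nle A u v \<longleftrightarrow> (\<exists>w. pplus A u w = Some v)"

definition directed_rel :: "('a \<Rightarrow> 'a \<Rightarrow> bool) \<Rightarrow> 'a set \<Rightarrow> bool" where
  "directed_rel le D \<longleftrightarrow> D \<noteq> {} \<and> (\<forall>x\<in>D. \<forall>y\<in>D. \<exists>z\<in>D. le x z \<and> le y z)"

definition is_lub_in :: "('a \<Rightarrow> bool) \<Rightarrow> ('a \<Rightarrow> 'a \<Rightarrow> bool) \<Rightarrow> 'a set \<Rightarrow> 'a \<Rightarrow> bool" where
  "is_lub_in P le S s \<longleftrightarrow> P s \<and> (\<forall>x\<in>S. le x s) \<and> (\<forall>b. P b \<and> (\<forall>x\<in>S. le x b) \<longrightarrow> le s b)"

definition scott_continuous_on ::
  "('a \<Rightarrow> bool) \<Rightarrow> ('a \<Rightarrow> 'a \<Rightarrow> bool) \<Rightarrow> ('a \<Rightarrow> 'a) \<Rightarrow> bool" where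
  "scott_continuous_on P le F \<longleftrightarrow>
     (\<forall>D s. (\<forall>x\<in>D. P x) \<and> directed_rel le D \<and> is_lub_in P le D s
        \<longrightarrow> is_lub_in P le (F ` D) (F s))"

definition partial_semiring :: "'u psr \<Rightarrow> bool" where
  "partial_semiring A \<longleftrightarrow>
     (\<forall>a b. pplus A a b = pplus A b a) \<and>
     (\<forall>a b c. Option.bind (pplus A a b) (\<lambda>x. pplus A x c)
              = Option.bind (pplus A b c) (\<lambda>y. pplus A a y)) \<and>
     (\<forall>a. pplus A a (pzero A) = Some a) \<and>
     (\<forall>a b c. ptimes A (ptimes A a b) c = ptimes A a (ptimes A b c)) \<and>
     (\<forall>a. ptimes A (pone A) a = a \<and> ptimes A a (pone A) = a) \<and>
     (\<forall>a b c d. pplus A b c = Some d \<longrightarrow>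
                 pplus A (ptimes A a b) (ptimes A a c) = Some (ptimes A a d)) \<and>
     (\<forall>a b c d. pplus A b c = Some d \<longrightarrow>
                 pplus A (ptimes A b a) (ptimes A c a) = Some (ptimes A d a)) \<and>
     (\<forall>a. ptimes A (pzero A) a = pzero A \<and> ptimes A a (pzero A) = pzero A)"

definition naturally_ordered :: "'u psr \<Rightarrow> bool" where
  "naturally_ordered A \<longleftrightarrow>
     (\<forall>u. nle A u u) \<and>
     (\<forall>u v w. nle A u v \<and> nle A v w \<longrightarrow> nle A u w) \<and>
     (\<forall>u v. nle A u v \<and> nle A v u \<longrightarrow> u = v)"

text \<open>Scott continuity of the semiring: the natural order is directed complete,
and + and * preserve suprema of directed sets in each argument (for + whenever
the sum with the supremum is defined; + is commutative so one argument suffices).\<close>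
definition scott_continuous_psr :: "'u psr \<Rightarrow> bool" where
  "scott_continuous_psr A \<longleftrightarrow>
     (\<forall>D. directed_rel (nle A) D \<longrightarrow> (\<exists>s. is_lub_in (\<lambda>_. True) (nle A) D s)) \<and>
     (\<forall>D s b r. directed_rel (nle A) D \<and> is_lub_in (\<lambda>_. True) (nle A) D s
        \<and> pplus A s b = Some r
        \<longrightarrow> is_lub_in (\<lambda>_. True) (nle A) {x. \<exists>d\<in>D. pplus A d b = Some x} r) \<and>
     (\<forall>D s b. directed_rel (nle A) D \<and> is_lub_in (\<lambda>_. True) (nle A) D s
        \<longrightarrow> is_lub_in (\<lambda>_. True) (nle A) ((\<lambda>d. ptimes A d b) ` D) (ptimes A s b)
          \<and> is_lub_in (\<lambda>_. True) (nle A) ((\<lambda>d. ptimes A b d) ` D) (ptimes A b s))"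

definition has_top :: "'u psr \<Rightarrow> bool" where
  "has_top A \<longleftrightarrow> (\<exists>t. \<forall>u. nle A u t)"

definition outcome_algebra :: "'u psr \<Rightarrow> bool" where
  "outcome_algebra A \<longleftrightarrow> partial_semiring A \<and> naturally_ordered A
      \<and> scott_continuous_psr A \<and> has_top A"

inductive fsum :: "'u psr \<Rightarrow> ('a \<Rightarrow> 'u) \<Rightarrow> 'a set \<Rightarrow> 'u \<Rightarrow> bool"
  for A :: "'u psr" and f :: "'a \<Rightarrow> 'u" where
  fsum_empty: "fsum A f {} (pzero A)"
| fsum_insert: "x \<notin> F \<Longrightarrow> fsum A f F v \<Longrightarrow> pplus A (f x) v = Some w
                  \<Longrightarrow> fsum A f (insert x F) w"

definition psum :: "'u psr \<Rightarrow> ('a \<Rightarrow> 'u) \<Rightarrow> 'a set \<Rightarrow> 'u \<Rightarrow> bool" where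
  "psum A f S s \<longleftrightarrow>
     (\<forall>F. finite F \<and> F \<subseteq> S \<longrightarrow> (\<exists>v. fsum A f F v)) \<and>
     is_lub_in (\<lambda>_. True) (nle A) {v. \<exists>F. finite F \<and> F \<subseteq> S \<and> fsum A f F v} s"

definition supp :: "'u psr \<Rightarrow> ('x \<Rightarrow> 'u) \<Rightarrow> 'x set" where
  "supp A m = {x. m x \<noteq> pzero A}"

definition isW :: "'u psr \<Rightarrow> ('x \<Rightarrow> 'u) \<Rightarrow> bool" where
  "isW A m \<longleftrightarrow> countable (supp A m) \<and> (\<exists>s. psum A m (supp A m) s)"

definition Wle :: "'u psr \<Rightarrow> ('x \<Rightarrow> 'u) \<Rightarrow> ('x \<Rightarrow> 'u) \<Rightarrow> bool" where
  "Wle A m1 m2 \<longleftrightarrow> (\<exists>m. isW A m \<and> (\<forall>x. pplus A (m1 x) (m x) = Some (m2 x)))"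

definition eta :: "'u psr \<Rightarrow> 'x \<Rightarrow> ('x \<Rightarrow> 'u)" where
  "eta A x = (\<lambda>y. if x = y then pone A else pzero A)"

definition wplus :: "'u psr \<Rightarrow> ('x \<Rightarrow> 'u) \<Rightarrow> ('x \<Rightarrow> 'u) \<Rightarrow> ('x \<Rightarrow> 'u) option" where
  "wplus A m1 m2 =
     (let r = (\<lambda>x. the (pplus A (m1 x) (m2 x)))
      in if (\<forall>x. pplus A (m1 x) (m2 x) \<noteq> None) \<and> isW A r then Some r else None)"

definition wscale :: "'u psr \<Rightarrow> 'u \<Rightarrow> ('x \<Rightarrow> 'u) \<Rightarrow> ('x \<Rightarrow> 'u)" where
  "wscale A u m = (\<lambda>x. ptimes A u (m x))"

text \<open>Kleisli extension f-dagger: f\<dagger>(m)(y) = sum over supp m of m(x) * f(x)(y);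
defined iff every such sum is defined and the result lies in W(Y).\<close>
definition kext :: "'u psr \<Rightarrow> ('x \<Rightarrow> ('y \<Rightarrow> 'u)) \<Rightarrow> ('x \<Rightarrow> 'u) \<Rightarrow> ('y \<Rightarrow> 'u) option" where
  "kext A f m =
     (let r = (\<lambda>y. THE s. psum A (\<lambda>x. ptimes A (m x) (f x y)) (supp A m) s)
      in if (\<forall>y. \<exists>s. psum A (\<lambda>x. ptimes A (m x) (f x y)) (supp A m) s) \<and> isW A r
         then Some r else None)"

datatype 's test = TTrue | TFalse | TPrim "'s set" | TNot "'s test"
  | TAnd "'s test" "'s test" | TOr "'s test" "'s test"

fun test_sem :: "'s test \<Rightarrow> 's \<Rightarrow> bool" where
  "test_sem TTrue s = True"
| "test_sem TFalse s = False"
| "test_sem (TPrim t) s = (s \<in> t)"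
| "test_sem (TNot b) s = (\<not> test_sem b s)"
| "test_sem (TAnd b1 b2) s = (test_sem b1 s \<and> test_sem b2 s)"
| "test_sem (TOr b1 b2) s = (test_sem b1 s \<or> test_sem b2 s)"

datatype ('s, 'u) expr = ETest "'s test" | EWeight 'u

fun expr_sem :: "'u psr \<Rightarrow> ('s, 'u) expr \<Rightarrow> 's \<Rightarrow> 'u" where
  "expr_sem A (ETest b) s = (if test_sem b s then pone A else pzero A)"
| "expr_sem A (EWeight u) s = u"

text \<open>c is the (total) denotation of the program C.\<close>
definition Phi :: "'u psr \<Rightarrow> ('s \<Rightarrow> ('s \<Rightarrow> 'u)) \<Rightarrow> ('s, 'u) expr \<Rightarrow> ('s, 'u) expr
                   \<Rightarrow> ('s \<Rightarrow> ('s \<Rightarrow> 'u)) \<Rightarrow> 's \<Rightarrow> ('s \<Rightarrow> 'u) option" where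
  "Phi A c e e' f \<sigma> =
     Option.bind (kext A f (c \<sigma>))
       (\<lambda>m. wplus A (wscale A (expr_sem A e \<sigma>) m) (wscale A (expr_sem A e' \<sigma>) (eta A \<sigma>)))"

definition Phi_total :: "'u psr \<Rightarrow> ('s \<Rightarrow> ('s \<Rightarrow> 'u)) \<Rightarrow> ('s, 'u) expr \<Rightarrow> ('s, 'u) expr \<Rightarrow> bool" where
  "Phi_total A c e e' \<longleftrightarrow>
     (\<forall>f. (\<forall>\<sigma>. isW A (f \<sigma>)) \<longrightarrow> (\<forall>\<sigma>. Phi A c e e' f \<sigma> \<noteq> None))"

definition ple :: "'u psr \<Rightarrow> ('s \<Rightarrow> ('t \<Rightarrow> 'u)) \<Rightarrow> ('s \<Rightarrow> ('t \<Rightarrow> 'u)) \<Rightarrow> bool" where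
  "ple A f1 f2 \<longleftrightarrow> (\<forall>\<sigma>. Wle A (f1 \<sigma>) (f2 \<sigma>))"

end

theory Submission
  imports Defs
begin

(* Suprema of directed sets in the pointwise order on \<Sigma> \<Rightarrow> W(\<Sigma>) are computed coordinatewise, so it
   suffices that every coordinate of Phi preserves directed suprema. Products and binary sums do so
   by Scott continuity of the semiring. A countable sum is the supremum of its finite partial sums;
   finite sums commute with directed suprema by induction, using that + is jointly continuous, and
   suprema commute with suprema. *)

lemma directed_rel_witnesses:
  assumes "directed_rel R I"
    and "\<And>i. i \<in> I \<Longrightarrow> \<exists>v. P i v"
    and "\<And>i j v w. i \<in> I \<Longrightarrow> j \<in> I \<Longrightarrow> R i j \<Longrightarrow> P i v \<Longrightarrow> P j w \<Longrightarrow> Q v w"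
  shows "directed_rel Q {v. \<exists>i\<in>I. P i v}"
  unfolding directed_rel_def
proof (intro conjI ballI)
  obtain i where "i \<in> I" using assms(1) unfolding directed_rel_def by blast
  then show "{v. \<exists>i\<in>I. P i v} \<noteq> {}" using assms(2) by blast
next
  fix v1 v2 assume "v1 \<in> {v. \<exists>i\<in>I. P i v}" "v2 \<in> {v. \<exists>i\<in>I. P i v}"
  then obtain i1 i2 where i: "i1 \<in> I" "P i1 v1" "i2 \<in> I" "P i2 v2" by blast
  then obtain k where k: "k \<in> I" "R i1 k" "R i2 k" using assms(1) unfolding directed_rel_def by blast
  then obtain w where "P k w" using assms(2) by blast
  then show "\<exists>w\<in>{v. \<exists>i\<in>I. P i v}. Q v1 w \<and> Q v2 w" using assms(3) i k by blast
qed

lemma directed_rel_image: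
  assumes "directed_rel R I" and "\<And>i j. i \<in> I \<Longrightarrow> j \<in> I \<Longrightarrow> R i j \<Longrightarrow> Q (h i) (h j)"
  shows "directed_rel Q (h ` I)"
proof -
  have "directed_rel Q {v. \<exists>i\<in>I. v = h i}"
    by (rule directed_rel_witnesses[OF assms(1)]) (auto intro: assms(2))
  then show ?thesis by (simp add: image_def Bex_def eq_commute)
qed

lemma is_lub_inD:
  assumes "is_lub_in P le S s"
  shows "P s" and "x \<in> S \<Longrightarrow> le x s" and "P b \<Longrightarrow> (\<And>x. x \<in> S \<Longrightarrow> le x b) \<Longrightarrow> le s b"
  using assms unfolding is_lub_in_def by blast+

locale ordered_psr =
  fixes A :: "'u psr"
  assumes partial_semiring: "partial_semiring A"
    and naturally_ordered: "naturally_ordered A"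
begin

abbreviation le :: "'u \<Rightarrow> 'u \<Rightarrow> bool" (infix "\<preceq>" 50)
  where "u \<preceq> v \<equiv> nle A u v"

abbreviation lub :: "'u set \<Rightarrow> 'u \<Rightarrow> bool"
  where "lub S s \<equiv> is_lub_in (\<lambda>_. True) (nle A) S s"

abbreviation pointwise_le :: "('x \<Rightarrow> 'u) \<Rightarrow> ('x \<Rightarrow> 'u) \<Rightarrow> bool"
  where "pointwise_le g h \<equiv> \<forall>x. g x \<preceq> h x"

lemma plus_commute: "pplus A a b = pplus A b a"
  using partial_semiring unfolding partial_semiring_def by blast

lemma plus_assoc:
  "Option.bind (pplus A a b) (\<lambda>x. pplus A x c) = Option.bind (pplus A b c) (\<lambda>y. pplus A a y)"
  using partial_semiring unfolding partial_semiring_def by blast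

lemma plus_assoc_SomeD:
  assumes "pplus A a b = Some ab" and "pplus A ab c = Some r"
  obtains bc where "pplus A b c = Some bc" and "pplus A a bc = Some r"
proof -
  have "Option.bind (pplus A b c) (\<lambda>y. pplus A a y) = Some r"
    using assms plus_assoc[of a b c] by simp
  then show ?thesis using that by (cases "pplus A b c") auto
qed

lemma plus_assoc_SomeD':
  assumes "pplus A b c = Some bc" and "pplus A a bc = Some r"
  obtains ab where "pplus A a b = Some ab" and "pplus A ab c = Some r"
proof -
  have "Option.bind (pplus A a b) (\<lambda>x. pplus A x c) = Some r"
    using assms plus_assoc[of a b c] by simp
  then show ?thesis using that by (cases "pplus A a b") auto
qed

lemma plus_zero_left: "pplus A (pzero A) a = Some a"
  using partial_semiring plus_commute unfolding partial_semiring_def by metis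

lemma times_plus_distrib_left:
  "pplus A b c = Some d \<Longrightarrow> pplus A (ptimes A a b) (ptimes A a c) = Some (ptimes A a d)"
  using partial_semiring unfolding partial_semiring_def by blast

lemma le_refl: "u \<preceq> u"
  using naturally_ordered unfolding naturally_ordered_def by blast

lemma le_trans: "u \<preceq> v \<Longrightarrow> v \<preceq> w \<Longrightarrow> u \<preceq> w"
  using naturally_ordered unfolding naturally_ordered_def by blast

lemma le_antisym: "u \<preceq> v \<Longrightarrow> v \<preceq> u \<Longrightarrow> u = v"
  using naturally_ordered unfolding naturally_ordered_def by blast

lemma zero_le: "pzero A \<preceq> a"
  unfolding nle_def using plus_zero_left by blast

lemma le_plus_left: "pplus A a b = Some c \<Longrightarrow> a \<preceq> c"
  unfolding nle_def by blast

lemma le_plus_right: "pplus A a b = Some c \<Longrightarrow> b \<preceq> c"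
  using le_plus_left plus_commute by metis

lemma times_mono: "b \<preceq> c \<Longrightarrow> ptimes A a b \<preceq> ptimes A a c"
  unfolding nle_def using times_plus_distrib_left by blast

lemma plus_mono_left:
  assumes "a \<preceq> a'" and "pplus A a' b = Some r"
  obtains q where "pplus A a b = Some q" and "q \<preceq> r"
proof -
  obtain t where "pplus A a t = Some a'" using assms(1) unfolding nle_def by blast
  then obtain tb where tb: "pplus A t b = Some tb" "pplus A a tb = Some r"
    using assms(2) by (rule plus_assoc_SomeD)
  have "pplus A b t = Some tb" using tb(1) plus_commute by metis
  then obtain q where "pplus A a b = Some q" "pplus A q t = Some r"
    using tb(2) by (rule plus_assoc_SomeD')
  then show ?thesis using that le_plus_left by blast
qed

lemma plus_mono:
  assumes "a \<preceq> a'" and "b \<preceq> b'" and "pplus A a' b' = Some r"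
  obtains q where "pplus A a b = Some q" and "q \<preceq> r"
proof -
  obtain q1 where q1: "pplus A b' a = Some q1" "q1 \<preceq> r"
    using plus_mono_left[OF assms(1,3)] plus_commute by metis
  obtain q where "pplus A b a = Some q" "q \<preceq> q1"
    using plus_mono_left[OF assms(2) q1(1)] by blast
  then show ?thesis using that q1(2) plus_commute le_trans by metis
qed

lemma lub_upper: "lub S s \<Longrightarrow> x \<in> S \<Longrightarrow> x \<preceq> s"
  unfolding is_lub_in_def by blast

lemma lub_least: "lub S s \<Longrightarrow> (\<And>x. x \<in> S \<Longrightarrow> x \<preceq> b) \<Longrightarrow> s \<preceq> b"
  unfolding is_lub_in_def by blast

lemma lubI: "(\<And>x. x \<in> S \<Longrightarrow> x \<preceq> s) \<Longrightarrow> (\<And>b. (\<And>x. x \<in> S \<Longrightarrow> x \<preceq> b) \<Longrightarrow> s \<preceq> b) \<Longrightarrow> lub S s"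
  unfolding is_lub_in_def by blast

lemma lub_unique: "lub S s \<Longrightarrow> lub S t \<Longrightarrow> s = t"
  using lub_upper lub_least le_antisym by metis

lemma lub_cofinal:
  assumes "lub S s"
    and "\<And>x. x \<in> S \<Longrightarrow> \<exists>y\<in>T. x \<preceq> y" and "\<And>y. y \<in> T \<Longrightarrow> \<exists>x\<in>S. y \<preceq> x"
  shows "lub T s"
proof (rule lubI)
  show "y \<preceq> s" if "y \<in> T" for y
    using assms(1,3) that lub_upper le_trans by metis
  show "s \<preceq> b" if "\<And>y. y \<in> T \<Longrightarrow> y \<preceq> b" for b
    using assms(1,2) that lub_least le_trans by metis
qed

lemma fsum_remove:
  assumes "fsum A h G w" and "x \<in> G"
  obtains v where "fsum A h (G - {x}) v" and "pplus A (h x) v = Some w"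
  using assms
proof (induction arbitrary: thesis rule: fsum.induct)
  case fsum_empty
  then show ?case by simp
next
  case (fsum_insert z F v w)
  show ?case
  proof (cases "z = x")
    case True
    then show ?thesis using fsum_insert by (metis Diff_insert_absorb)
  next
    case False
    then obtain v0 where v0: "fsum A h (F - {x}) v0" "pplus A (h x) v0 = Some v"
      using fsum_insert.IH fsum_insert.prems(2) by blast
    obtain zx where "pplus A (h z) (h x) = Some zx" "pplus A zx v0 = Some w"
      using v0(2) fsum_insert.hyps(3) by (rule plus_assoc_SomeD')
    then have "pplus A (h x) (h z) = Some zx" "pplus A zx v0 = Some w"
      using plus_commute by metis+
    then obtain w0 where w0: "pplus A (h z) v0 = Some w0" "pplus A (h x) w0 = Some w"
      by (rule plus_assoc_SomeD)
    have "fsum A h (insert z (F - {x})) w0"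
      using fsum.fsum_insert[OF _ v0(1) w0(1)] fsum_insert.hyps(1) by blast
    moreover have "insert z (F - {x}) = insert z F - {x}" using False by auto
    ultimately show ?thesis using fsum_insert.prems(1) w0(2) by metis
  qed
qed

lemma fsum_mono:
  "fsum A f F v \<Longrightarrow> fsum A h F w \<Longrightarrow> (\<And>x. x \<in> F \<Longrightarrow> f x \<preceq> h x) \<Longrightarrow> v \<preceq> w"
proof (induction arbitrary: w rule: fsum.induct)
  case fsum_empty
  then show ?case by (cases rule: fsum.cases) (auto intro: le_refl)
next
  case (fsum_insert x F v v')
  obtain w0 where w0: "fsum A h F w0" "pplus A (h x) w0 = Some w"
    using fsum_remove[OF fsum_insert.prems(1), of x] fsum_insert.hyps(1) by auto
  have "v \<preceq> w0" using fsum_insert.IH[OF w0(1)] fsum_insert.prems(2) by simp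
  then obtain q where "pplus A (f x) v = Some q" "q \<preceq> w"
    using plus_mono[OF _ _ w0(2)] fsum_insert.prems(2) by blast
  then show ?case using fsum_insert.hyps(3) by simp
qed

lemma fsum_exists_below:
  "fsum A h F w \<Longrightarrow> (\<And>x. x \<in> F \<Longrightarrow> f x \<preceq> h x) \<Longrightarrow> \<exists>v. fsum A f F v \<and> v \<preceq> w"
proof (induction rule: fsum.induct)
  case fsum_empty
  then show ?case using fsum.fsum_empty le_refl by blast
next
  case (fsum_insert x F v w)
  then obtain v0 where v0: "fsum A f F v0" "v0 \<preceq> v" by auto
  obtain q where q: "pplus A (f x) v0 = Some q" "q \<preceq> w"
    using plus_mono[OF _ v0(2) fsum_insert.hyps(3)] fsum_insert.prems by blast
  then show ?case using fsum.fsum_insert[OF fsum_insert.hyps(1) v0(1) q(1)] by blast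
qed

lemma fsum_le_fsum_union:
  assumes "fsum A f F v" and "finite H"
  shows "fsum A f (F \<union> H) w \<Longrightarrow> v \<preceq> w"
  using assms(2)
proof (induction H arbitrary: w rule: finite_induct)
  case empty
  then show ?case using fsum_mono[OF assms(1)] le_refl by simp
next
  case (insert x H)
  show ?case
  proof (cases "x \<in> F \<union> H")
    case True
    then show ?thesis using insert by (simp add: insert_absorb)
  next
    case False
    obtain w0 where "fsum A f (F \<union> insert x H - {x}) w0" "pplus A (f x) w0 = Some w"
      using fsum_remove[OF insert.prems] by blast
    moreover have "F \<union> insert x H - {x} = F \<union> H" using False by auto
    ultimately show ?thesis using insert.IH le_plus_right le_trans by metis
  qed
qed

lemma psum_lub: "psum A f X s \<Longrightarrow> lub {v. \<exists>F. finite F \<and> F \<subseteq> X \<and> fsum A f F v} s"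
  unfolding psum_def by (rule conjunct2)

lemma psum_fsum_exists: "psum A f X s \<Longrightarrow> finite F \<Longrightarrow> F \<subseteq> X \<Longrightarrow> \<exists>v. fsum A f F v"
  unfolding psum_def by blast

lemma psum_upper: "psum A f X s \<Longrightarrow> finite F \<Longrightarrow> F \<subseteq> X \<Longrightarrow> fsum A f F v \<Longrightarrow> v \<preceq> s"
  using lub_upper[OF psum_lub] by blast

lemma psum_unique: "psum A f X s \<Longrightarrow> psum A f X t \<Longrightarrow> s = t"
  using lub_unique[OF psum_lub psum_lub] by blast

lemma psum_mono:
  assumes "psum A f X s" and "psum A h X t" and "\<And>x. x \<in> X \<Longrightarrow> f x \<preceq> h x"
  shows "s \<preceq> t"
proof (rule lub_least[OF psum_lub[OF assms(1)]])
  fix v assume "v \<in> {v. \<exists>F. finite F \<and> F \<subseteq> X \<and> fsum A f F v}"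
  then obtain F where F: "finite F" "F \<subseteq> X" "fsum A f F v" by blast
  obtain w where w: "fsum A h F w" using psum_fsum_exists[OF assms(2) F(1,2)] by blast
  have "v \<preceq> w" using fsum_mono[OF F(3) w] assms(3) F(2) by blast
  then show "v \<preceq> t" using psum_upper[OF assms(2) F(1,2) w] le_trans by blast
qed

lemma fsums_directed:
  assumes "directed_rel pointwise_le G" and "\<And>h. h \<in> G \<Longrightarrow> pointwise_le h g"
    and "fsum A g F v"
  shows "directed_rel (nle A) {w. \<exists>h\<in>G. fsum A h F w}"
  using assms(1)
proof (rule directed_rel_witnesses)
  show "\<exists>w. fsum A h F w" if "h \<in> G" for h
    using fsum_exists_below[OF assms(3)] assms(2)[OF that] by blast
  show "w1 \<preceq> w2" if "pointwise_le h1 h2" "fsum A h1 F w1" "fsum A h2 F w2" for h1 h2 w1 w2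
    using fsum_mono[OF that(2,3)] that(1) by blast
qed

lemma psums_directed:
  assumes "directed_rel pointwise_le G" and "\<And>h. h \<in> G \<Longrightarrow> \<exists>v. psum A h X v"
  shows "directed_rel (nle A) {v. \<exists>h\<in>G. psum A h X v}"
  using assms(1)
proof (rule directed_rel_witnesses)
  show "\<exists>v. psum A h X v" if "h \<in> G" for h
    using assms(2) that .
  show "v1 \<preceq> v2" if "pointwise_le h1 h2" "psum A h1 X v1" "psum A h2 X v2" for h1 h2 v1 v2
    using psum_mono[OF that(2,3)] that(1) by blast
qed

lemma Phi_total_char:
  assumes "Phi_total A c e e'" and "\<forall>\<sigma>. isW A (f \<sigma>)"
  shows "isW A (the (Phi A c e e' f \<sigma>))"
    and "\<exists>v. psum A (\<lambda>x. ptimes A (c \<sigma> x) (f x y)) (supp A (c \<sigma>)) v \<and>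
           pplus A (ptimes A (expr_sem A e \<sigma>) v) (ptimes A (expr_sem A e' \<sigma>) (eta A \<sigma> y))
             = Some (the (Phi A c e e' f \<sigma>) y)"
proof -
  obtain m where m: "Phi A c e e' f \<sigma> = Some m"
    using assms unfolding Phi_total_def by blast
  then obtain r where r: "kext A f (c \<sigma>) = Some r"
    and wp: "wplus A (wscale A (expr_sem A e \<sigma>) r) (wscale A (expr_sem A e' \<sigma>) (eta A \<sigma>)) = Some m"
    unfolding Phi_def by (cases "kext A f (c \<sigma>)") auto
  then show "isW A (the (Phi A c e e' f \<sigma>))"
    using m unfolding wplus_def Let_def by (auto split: if_splits)
  have m_y: "pplus A (ptimes A (expr_sem A e \<sigma>) (r y)) (ptimes A (expr_sem A e' \<sigma>) (eta A \<sigma> y))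
      = Some (m y)"
    using wp unfolding wplus_def wscale_def Let_def by (auto split: if_splits)
  obtain s where s: "psum A (\<lambda>x. ptimes A (c \<sigma> x) (f x y)) (supp A (c \<sigma>)) s"
    and r_y: "r y = (THE s. psum A (\<lambda>x. ptimes A (c \<sigma> x) (f x y)) (supp A (c \<sigma>)) s)"
    using r unfolding kext_def Let_def by (auto split: if_splits)
  have "r y = s" unfolding r_y using s psum_unique by blast
  then show "\<exists>v. psum A (\<lambda>x. ptimes A (c \<sigma> x) (f x y)) (supp A (c \<sigma>)) v \<and>
           pplus A (ptimes A (expr_sem A e \<sigma>) v) (ptimes A (expr_sem A e' \<sigma>) (eta A \<sigma> y))
             = Some (the (Phi A c e e' f \<sigma>) y)"
    using s m m_y by auto
qed

end

locale continuous_psr = ordered_psr +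
  assumes scott_continuous: "scott_continuous_psr A"
begin

lemma directed_has_lub: "directed_rel (nle A) D \<Longrightarrow> \<exists>s. lub D s"
  using scott_continuous unfolding scott_continuous_psr_def by blast

lemma lub_plus_left:
  "directed_rel (nle A) D \<Longrightarrow> lub D s \<Longrightarrow> pplus A s b = Some r
    \<Longrightarrow> lub {x. \<exists>d\<in>D. pplus A d b = Some x} r"
  using scott_continuous unfolding scott_continuous_psr_def by blast

lemma lub_times_right:
  "directed_rel (nle A) D \<Longrightarrow> lub D s \<Longrightarrow> lub ((\<lambda>d. ptimes A a d) ` D) (ptimes A a s)"
  using scott_continuous unfolding scott_continuous_psr_def by blast

lemma lub_plus:
  assumes K1: "directed_rel (nle A) K1" "lub K1 a"
    and K2: "directed_rel (nle A) K2" "lub K2 b"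
    and ab: "pplus A a b = Some r"
  shows "lub {z. \<exists>p\<in>K1. \<exists>q\<in>K2. pplus A p q = Some z} r"
proof (rule lubI)
  fix z assume "z \<in> {z. \<exists>p\<in>K1. \<exists>q\<in>K2. pplus A p q = Some z}"
  then obtain p q where "p \<in> K1" "q \<in> K2" and pq: "pplus A p q = Some z" by blast
  then obtain z' where "pplus A p q = Some z'" "z' \<preceq> r"
    using plus_mono[OF lub_upper[OF K1(2)] lub_upper[OF K2(2)] ab] by blast
  then show "z \<preceq> r" using pq by simp
next
  fix u assume bound: "\<And>z. z \<in> {z. \<exists>p\<in>K1. \<exists>q\<in>K2. pplus A p q = Some z} \<Longrightarrow> z \<preceq> u"
  have aq_le: "aq \<preceq> u" if "q \<in> K2" "pplus A a q = Some aq" for q aq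
    using lub_least[OF lub_plus_left[OF K1 that(2)]] bound that(1) by blast
  have "pplus A b a = Some r" using ab plus_commute by metis
  from lub_plus_left[OF K2 this] show "r \<preceq> u"
  proof (rule lub_least)
    fix x assume "x \<in> {x. \<exists>q\<in>K2. pplus A q a = Some x}"
    then obtain q where "q \<in> K2" "pplus A a q = Some x" using plus_commute by fastforce
    then show "x \<preceq> u" by (rule aq_le)
  qed
qed

lemma lub_times_plus:
  assumes "directed_rel (nle A) K" and "lub K k" and "pplus A (ptimes A a k) b = Some r"
  shows "lub {z. \<exists>t\<in>K. pplus A (ptimes A a t) b = Some z} r"
proof -
  have "directed_rel (nle A) ((\<lambda>t. ptimes A a t) ` K)"
    using assms(1) times_mono by (rule directed_rel_image)
  from lub_plus_left[OF this lub_times_right[OF assms(1,2)] assms(3)]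
  show ?thesis by (simp add: Bex_def)
qed

lemma isW_downward_closed:
  assumes "isW A h" and "pointwise_le f h"
  shows "isW A f"
proof -
  have supp_sub: "supp A f \<subseteq> supp A h"
  proof
    fix x assume "x \<in> supp A f"
    then have "f x \<noteq> pzero A" unfolding supp_def by simp
    then have "h x \<noteq> pzero A" using assms(2) le_antisym zero_le by metis
    then show "x \<in> supp A h" unfolding supp_def by simp
  qed
  then have "countable (supp A f)" using assms(1) countable_subset unfolding isW_def by blast
  obtain s where s: "psum A h (supp A h) s" using assms(1) unfolding isW_def by blast
  have fsum_ex: "\<exists>v. fsum A f F v" if "finite F" "F \<subseteq> supp A f" for F
    using psum_fsum_exists[OF s that(1)] that(2) supp_sub fsum_exists_below assms(2) by blast
  define PS where "PS = {v. \<exists>F. finite F \<and> F \<subseteq> supp A f \<and> fsum A f F v}"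
  have "directed_rel (nle A) PS"
    unfolding directed_rel_def
  proof (intro conjI ballI)
    show "PS \<noteq> {}" unfolding PS_def using fsum.fsum_empty by blast
  next
    fix v1 v2 assume "v1 \<in> PS" "v2 \<in> PS"
    then obtain F1 F2 where F: "finite F1" "F1 \<subseteq> supp A f" "fsum A f F1 v1"
      "finite F2" "F2 \<subseteq> supp A f" "fsum A f F2 v2" unfolding PS_def by blast
    obtain v where v: "fsum A f (F1 \<union> F2) v" using fsum_ex[of "F1 \<union> F2"] F by blast
    have "v1 \<preceq> v" using fsum_le_fsum_union[OF F(3) F(4) v] .
    moreover have "v2 \<preceq> v" using fsum_le_fsum_union[OF F(6) F(1)] v by (simp add: Un_commute)
    moreover have "v \<in> PS" unfolding PS_def using v F by blast
    ultimately show "\<exists>w\<in>PS. v1 \<preceq> w \<and> v2 \<preceq> w" by blast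
  qed
  then obtain s' where "lub PS s'" using directed_has_lub by blast
  then have "psum A f (supp A f) s'" unfolding psum_def PS_def using fsum_ex by blast
  with \<open>countable (supp A f)\<close> show ?thesis unfolding isW_def by blast
qed

lemma Wle_imp_le: "Wle A m1 m2 \<Longrightarrow> m1 x \<preceq> m2 x"
  unfolding Wle_def nle_def by blast

lemma Wle_iff: "isW A m2 \<Longrightarrow> Wle A m1 m2 \<longleftrightarrow> pointwise_le m1 m2"
proof
  assume "pointwise_le m1 m2" and m2: "isW A m2"
  define m where "m x = (SOME w. pplus A (m1 x) w = Some (m2 x))" for x
  have m: "pplus A (m1 x) (m x) = Some (m2 x)" for x
    using \<open>pointwise_le m1 m2\<close>[rule_format, of x] unfolding m_def nle_def by (rule someI_ex)
  have "isW A m" using isW_downward_closed[OF m2] m le_plus_right by blast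
  then show "Wle A m1 m2" unfolding Wle_def using m by blast
qed (simp add: Wle_imp_le)

lemma ple_imp_le: "ple A f1 f2 \<Longrightarrow> f1 \<sigma> x \<preceq> f2 \<sigma> x"
  unfolding ple_def by (simp add: Wle_imp_le)

lemma ple_iff: "\<forall>\<sigma>. isW A (f2 \<sigma>) \<Longrightarrow> ple A f1 f2 \<longleftrightarrow> (\<forall>\<sigma> x. f1 \<sigma> x \<preceq> f2 \<sigma> x)"
  unfolding ple_def using Wle_iff by blast

lemma fsum_directed_lub:
  assumes dir: "directed_rel pointwise_le G" and g: "\<And>x. lub ((\<lambda>h. h x) ` G) (g x)"
    and "fsum A g F v"
  shows "lub {w. \<exists>h\<in>G. fsum A h F w} v"
  using assms(3)
proof (induction rule: fsum.induct)
  case fsum_empty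
  obtain h where "h \<in> G" using dir unfolding directed_rel_def by blast
  moreover have "w = pzero A" if "fsum A h {} w" for h w
    using that by (cases rule: fsum.cases) auto
  ultimately have "{w. \<exists>h\<in>G. fsum A h {} w} = {pzero A}"
    using fsum.fsum_empty by blast
  then show ?case by (intro lubI) (simp_all add: le_refl)
next
  case (fsum_insert x F v w)
  have below_g: "pointwise_le h g" if "h \<in> G" for h
    using lub_upper[OF g] that by blast
  have F_eq: "insert x F - {x} = F" using fsum_insert.hyps(1) by simp
  let ?K1 = "(\<lambda>h. h x) ` G" and ?K2 = "{v. \<exists>h\<in>G. fsum A h F v}"
  let ?pairs = "{z. \<exists>p\<in>?K1. \<exists>q\<in>?K2. pplus A p q = Some z}"
  have dir_K1: "directed_rel (nle A) ?K1"
    using dir by (rule directed_rel_image) blast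
  have dir_K2: "directed_rel (nle A) ?K2"
    using fsums_directed[OF dir below_g fsum_insert.hyps(2)] .
  have pairs_lub: "lub ?pairs w"
    using lub_plus[OF dir_K1 g dir_K2 fsum_insert.IH fsum_insert.hyps(3)] .
  show ?case
  proof (rule lub_cofinal[OF pairs_lub])
    fix z assume "z \<in> ?pairs"
    then obtain h1 h2 q where h: "h1 \<in> G" "h2 \<in> G" "fsum A h2 F q" "pplus A (h1 x) q = Some z"
      by blast
    obtain k where k: "k \<in> G" "pointwise_le h1 k" "pointwise_le h2 k"
      using dir h(1,2) unfolding directed_rel_def by blast
    obtain r where r: "fsum A k (insert x F) r"
      using fsum_exists_below[OF fsum.fsum_insert[OF fsum_insert.hyps]] below_g[OF k(1)] by blast
    obtain r0 where r0: "fsum A k F r0" "pplus A (k x) r0 = Some r"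
      using fsum_remove[OF r insertI1, unfolded F_eq] by blast
    have "q \<preceq> r0" using fsum_mono[OF h(3) r0(1)] k(3) by blast
    then obtain z' where "pplus A (h1 x) q = Some z'" "z' \<preceq> r"
      using plus_mono[OF _ _ r0(2)] k(2) by blast
    then show "\<exists>y\<in>{w. \<exists>h\<in>G. fsum A h (insert x F) w}. z \<preceq> y"
      using h(4) r k(1) by auto
  next
    fix y assume "y \<in> {w. \<exists>h\<in>G. fsum A h (insert x F) w}"
    then obtain h where h: "h \<in> G" "fsum A h (insert x F) y" by blast
    then obtain y0 where "fsum A h F y0" "pplus A (h x) y0 = Some y"
      using fsum_remove[OF h(2) insertI1, unfolded F_eq] by blast
    then show "\<exists>z\<in>?pairs. y \<preceq> z" using h(1) le_refl by blast
  qed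
qed

lemma psum_directed_lub:
  assumes dir: "directed_rel pointwise_le G" and g: "\<And>x. lub ((\<lambda>h. h x) ` G) (g x)"
    and G_psum: "\<And>h. h \<in> G \<Longrightarrow> \<exists>v. psum A h X v" and "psum A g X s"
  shows "lub {v. \<exists>h\<in>G. psum A h X v} s"
proof (rule lubI)
  fix v assume "v \<in> {v. \<exists>h\<in>G. psum A h X v}"
  then obtain h where "h \<in> G" "psum A h X v" by blast
  moreover have "pointwise_le h g" using lub_upper[OF g] \<open>h \<in> G\<close> by blast
  ultimately show "v \<preceq> s" using psum_mono[OF _ assms(4)] by blast
next
  fix b assume bound: "\<And>v. v \<in> {v. \<exists>h\<in>G. psum A h X v} \<Longrightarrow> v \<preceq> b"
  show "s \<preceq> b"
  proof (rule lub_least[OF psum_lub[OF assms(4)]])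
    fix v assume "v \<in> {v. \<exists>F. finite F \<and> F \<subseteq> X \<and> fsum A g F v}"
    then obtain F where F: "finite F" "F \<subseteq> X" "fsum A g F v" by blast
    show "v \<preceq> b"
    proof (rule lub_least[OF fsum_directed_lub[OF dir g F(3)]])
      fix w assume "w \<in> {w. \<exists>h\<in>G. fsum A h F w}"
      then obtain h where h: "h \<in> G" "fsum A h F w" by blast
      then obtain t where "psum A h X t" using G_psum by blast
      then have "w \<preceq> t" using psum_upper[OF _ F(1,2) h(2)] by blast
      moreover have "t \<preceq> b" using bound h(1) \<open>psum A h X t\<close> by blast
      ultimately show "w \<preceq> b" by (rule le_trans)
    qed
  qed
qed

lemma ple_lub_imp_pointwise_lub:
  assumes dir: "directed_rel (ple A) D"
    and s: "is_lub_in (\<lambda>f. \<forall>\<sigma>. isW A (f \<sigma>)) (ple A) D s"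
  shows "lub ((\<lambda>d. d \<sigma> x) ` D) (s \<sigma> x)"
proof -
  have s_W: "\<forall>\<sigma>. isW A (s \<sigma>)" using is_lub_inD(1)[OF s] .
  have below_s: "ple A d s" if "d \<in> D" for d using is_lub_inD(2)[OF s that] .
  have "directed_rel (nle A) ((\<lambda>d. d \<sigma> x) ` D)"
    using dir by (rule directed_rel_image) (rule ple_imp_le)
  then obtain t where t: "lub ((\<lambda>d. d \<sigma> x) ` D) t" using directed_has_lub by blast
  have t_le: "t \<preceq> s \<sigma> x"
  proof (rule lub_least[OF t])
    fix z assume "z \<in> (\<lambda>d. d \<sigma> x) ` D"
    then obtain d where "d \<in> D" "z = d \<sigma> x" by blast
    then show "z \<preceq> s \<sigma> x" using ple_imp_le[OF below_s] by simp
  qed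
  text \<open>Lowering s to t at the single point (\<sigma>, x) yields a weighting that still bounds D.\<close>
  define b where "b = s(\<sigma> := (s \<sigma>)(x := t))"
  have b_W: "\<forall>\<sigma>'. isW A (b \<sigma>')"
  proof
    fix \<sigma>'
    have "pointwise_le (b \<sigma>') (s \<sigma>')" unfolding b_def by (simp add: t_le le_refl)
    then show "isW A (b \<sigma>')" using isW_downward_closed s_W by blast
  qed
  have "ple A d b" if "d \<in> D" for d
  proof -
    have "d \<sigma>' x' \<preceq> b \<sigma>' x'" for \<sigma>' x'
    proof (cases "\<sigma>' = \<sigma> \<and> x' = x")
      case True
      then show ?thesis using lub_upper[OF t] that unfolding b_def by auto
    next
      case False
      then have "b \<sigma>' x' = s \<sigma>' x'" unfolding b_def by auto
      then show ?thesis using ple_imp_le[OF below_s[OF that]] by simp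
    qed
    then show ?thesis using ple_iff[OF b_W] by blast
  qed
  with b_W have "ple A s b" by (intro is_lub_inD(3)[OF s]) auto
  then have "s \<sigma> x \<preceq> t" using ple_imp_le[of s b \<sigma> x] unfolding b_def by simp
  then have "s \<sigma> x = t" using t_le by (rule le_antisym)
  with t show ?thesis by simp
qed

lemma pointwise_lub_imp_ple_lub:
  assumes g_W: "\<forall>\<sigma>. isW A (g \<sigma>)" and g: "\<And>\<sigma> x. lub ((\<lambda>f. f \<sigma> x) ` E) (g \<sigma> x)"
  shows "is_lub_in (\<lambda>f. \<forall>\<sigma>. isW A (f \<sigma>)) (ple A) E g"
proof -
  have "ple A f g" if "f \<in> E" for f
    unfolding ple_iff[OF g_W] using lub_upper[OF g imageI[OF that]] by simp
  moreover have "ple A g b" if b_W: "\<forall>\<sigma>. isW A (b \<sigma>)" and b: "\<forall>f\<in>E. ple A f b" for b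
  proof -
    have "g \<sigma> x \<preceq> b \<sigma> x" for \<sigma> x
    proof (rule lub_least[OF g])
      fix z assume "z \<in> (\<lambda>f. f \<sigma> x) ` E"
      then obtain f where "f \<in> E" and z: "z = f \<sigma> x" by blast
      then have "ple A f b" using b by blast
      then show "z \<preceq> b \<sigma> x" unfolding z by (rule ple_imp_le)
    qed
    then show ?thesis using ple_iff[OF b_W] by blast
  qed
  ultimately show ?thesis using g_W unfolding is_lub_in_def by blast
qed

lemma Phi_preserves_pointwise_lub:
  assumes tot: "Phi_total A c e e'"
    and D_W: "\<forall>d\<in>D. \<forall>\<sigma>. isW A (d \<sigma>)" and dir: "directed_rel (ple A) D"
    and s_W: "\<forall>\<sigma>. isW A (s \<sigma>)" and s: "\<And>x y. lub ((\<lambda>d. d x y) ` D) (s x y)"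
  shows "lub ((\<lambda>d. the (Phi A c e e' d \<sigma>) y) ` D) (the (Phi A c e e' s \<sigma>) y)"
proof -
  let ?X = "supp A (c \<sigma>)" and ?a = "expr_sem A e \<sigma>"
    and ?b = "ptimes A (expr_sem A e' \<sigma>) (eta A \<sigma> y)"
  let ?summand = "\<lambda>d x. ptimes A (c \<sigma> x) (d x y)"
  let ?G = "?summand ` D" and ?K = "{v. \<exists>h\<in>?summand ` D. psum A h ?X v}"
  have dir_G: "directed_rel pointwise_le ?G"
    using dir by (rule directed_rel_image) (simp add: times_mono ple_imp_le)
  have "directed_rel (nle A) ((\<lambda>d. d x y) ` D)" for x
    using dir by (rule directed_rel_image) (rule ple_imp_le)
  then have lub_G: "lub ((\<lambda>h. h x) ` ?G) (?summand s x)" for x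
    using lub_times_right[OF _ s] by (simp add: image_image)
  have G_psum: "\<exists>v. psum A h ?X v" if h: "h \<in> ?G" for h
  proof -
    obtain d where "d \<in> D" "h = ?summand d" using h by blast
    then show ?thesis using Phi_total_char(2)[OF tot, of d] D_W by blast
  qed
  obtain ks where ks: "psum A (?summand s) ?X ks"
    "pplus A (ptimes A ?a ks) ?b = Some (the (Phi A c e e' s \<sigma>) y)"
    using Phi_total_char(2)[OF tot s_W] by blast
  have lub_K: "lub ?K ks" using psum_directed_lub[OF dir_G lub_G G_psum ks(1)] .
  from lub_times_plus[OF psums_directed[OF dir_G G_psum] lub_K ks(2)]
  have "lub {z. \<exists>t\<in>?K. pplus A (ptimes A ?a t) ?b = Some z} (the (Phi A c e e' s \<sigma>) y)" .
  moreover have "{z. \<exists>t\<in>?K. pplus A (ptimes A ?a t) ?b = Some z}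
      = (\<lambda>d. the (Phi A c e e' d \<sigma>) y) ` D"
  proof (intro set_eqI iffI)
    fix z assume "z \<in> {z. \<exists>t\<in>?K. pplus A (ptimes A ?a t) ?b = Some z}"
    then obtain d t where d: "d \<in> D" "psum A (?summand d) ?X t" "pplus A (ptimes A ?a t) ?b = Some z"
      by blast
    then obtain v where "psum A (?summand d) ?X v"
      "pplus A (ptimes A ?a v) ?b = Some (the (Phi A c e e' d \<sigma>) y)"
      using Phi_total_char(2)[OF tot, of d] D_W by blast
    with d have "z = the (Phi A c e e' d \<sigma>) y" using psum_unique by (metis option.inject)
    with d(1) show "z \<in> (\<lambda>d. the (Phi A c e e' d \<sigma>) y) ` D" by blast
  next
    fix z assume "z \<in> (\<lambda>d. the (Phi A c e e' d \<sigma>) y) ` D"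
    then obtain d where "d \<in> D" "z = the (Phi A c e e' d \<sigma>) y" by blast
    then show "z \<in> {z. \<exists>t\<in>?K. pplus A (ptimes A ?a t) ?b = Some z}"
      using Phi_total_char(2)[OF tot, of d] D_W by blast
  qed
  ultimately show ?thesis by simp
qed

end

theorem lemmaA5:
  fixes A :: "'u psr"
    and c :: "'s \<Rightarrow> ('s \<Rightarrow> 'u)"
    and e e' :: "('s, 'u) expr"
  assumes "outcome_algebra A"
    and "\<forall>\<sigma>. isW A (c \<sigma>)"
    and "Phi_total A c e e'"
  shows "scott_continuous_on (\<lambda>f. \<forall>\<sigma>. isW A (f \<sigma>)) (ple A)
           (\<lambda>f \<sigma>. the (Phi A c e e' f \<sigma>))"
proof -
  interpret continuous_psr A
    using assms(1) unfolding outcome_algebra_def by unfold_locales auto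
  show ?thesis
    unfolding scott_continuous_on_def
  proof (intro allI impI, elim conjE)
    fix D :: "('s \<Rightarrow> 's \<Rightarrow> 'u) set" and s :: "'s \<Rightarrow> 's \<Rightarrow> 'u"
    assume D_W: "\<forall>d\<in>D. \<forall>\<sigma>. isW A (d \<sigma>)" and dir: "directed_rel (ple A) D"
      and s: "is_lub_in (\<lambda>f. \<forall>\<sigma>. isW A (f \<sigma>)) (ple A) D s"
    have s_W: "\<forall>\<sigma>. isW A (s \<sigma>)" using is_lub_inD(1)[OF s] .
    show "is_lub_in (\<lambda>f. \<forall>\<sigma>. isW A (f \<sigma>)) (ple A)
        ((\<lambda>f \<sigma>. the (Phi A c e e' f \<sigma>)) ` D) (\<lambda>\<sigma>. the (Phi A c e e' s \<sigma>))"
    proof (rule pointwise_lub_imp_ple_lub)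
      show "\<forall>\<sigma>. isW A (the (Phi A c e e' s \<sigma>))"
        using Phi_total_char(1)[OF assms(3) s_W] by blast
      show "lub ((\<lambda>f. f \<sigma> y) ` (\<lambda>f \<sigma>. the (Phi A c e e' f \<sigma>)) ` D) (the (Phi A c e e' s \<sigma>) y)"
        for \<sigma> y
        using Phi_preserves_pointwise_lub[OF assms(3) D_W dir s_W ple_lub_imp_pointwise_lub[OF dir s]]
        by (simp add: image_image)
    qed
  qed
qed

end
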